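(* Let $P$ be a finite set of points in $\mathbb{R}^m$ and let $(A,B)$ be an optimal 2-means partition of $P$ with $|A|\ge|B|$. Then at least $\frac{4}{7}|A|$ points of $A$ are high-revenue points (with respect to the split $P\to(A,B)$). Consequently $rev(A,B)\ge\frac{1}{35}|A||B|$.
   Context: Distances are Euclidean: $d(x,y)=\|x-y\|_2$. For finite nonempty $S$, $\rho(S)=\frac{1}{|S|}\sum_{u\in S}u$ and $\Delta_1(S)=\sum_{u\in S}d(u,\rho(S))^2$. A partition $(A,B)$ of $P$ into two nonempty sets is an optimal 2-means partition if it minimizes $\Delta_1(A)+\Delta_1(B)$ among all partitions of $P$ into two nonempty sets. For $i\in A$, $j\in B$, $rev(i,j)=\min\{d(i,j)/\max\{d(i,\rho(A)),d(j,\rho(B))\},\,1\}$ (equal to $1$ if the maximum is $0$), and $rev(A,B)=\sum_{i\in A}\sum_{j\in B}rev(i,j)$. For $u\in A$, the high-revenue set is $HR_B(u)=\{v\in B: rev(u,v)\ge\frac{1}{10}\}$ and the low-revenue set is $LR_B(u)=B\setminus HR_B(u)$. A point $u\in A$ is a high-revenue point if $|HR_B(u)|\ge\frac12|B|$, and a low-revenue point otherwise. *)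

theory Defs
  imports "HOL-Analysis.Analysis"
begin

definition centroid :: "'a::euclidean_space set \<Rightarrow> 'a" where
  "centroid S = (1 / real (card S)) *\<^sub>R (\<Sum>u\<in>S. u)"

definition cost1 :: "'a::euclidean_space set \<Rightarrow> real" where
  "cost1 S = (\<Sum>u\<in>S. (dist u (centroid S))\<^sup>2)"

definition two_partition :: "'a set \<Rightarrow> 'a set \<Rightarrow> 'a set \<Rightarrow> bool" where
  "two_partition P A B \<longleftrightarrow> A \<noteq> {} \<and> B \<noteq> {} \<and> A \<inter> B = {} \<and> A \<union> B = P"

definition optimal_2means :: "'a::euclidean_space set \<Rightarrow> 'a set \<Rightarrow> 'a set \<Rightarrow> bool" where
  "optimal_2means P A B \<longleftrightarrow> two_partition P A B \<and>
     (\<forall>A' B'. two_partition P A' B' \<longrightarrow> cost1 A + cost1 B \<le> cost1 A' + cost1 B')"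

definition rev_pt :: "'a::euclidean_space set \<Rightarrow> 'a set \<Rightarrow> 'a \<Rightarrow> 'a \<Rightarrow> real" where
  "rev_pt A B i j =
     (let M = max (dist i (centroid A)) (dist j (centroid B))
      in if M = 0 then 1 else min (dist i j / M) 1)"

definition rev_set :: "'a::euclidean_space set \<Rightarrow> 'a set \<Rightarrow> real" where
  "rev_set A B = (\<Sum>i\<in>A. \<Sum>j\<in>B. rev_pt A B i j)"

definition HR :: "'a::euclidean_space set \<Rightarrow> 'a set \<Rightarrow> 'a \<Rightarrow> 'a set" where
  "HR A B u = {v \<in> B. rev_pt A B u v \<ge> 1/10}"

definition LR :: "'a::euclidean_space set \<Rightarrow> 'a set \<Rightarrow> 'a \<Rightarrow> 'a set" where
  "LR A B u = B - HR A B u"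

definition high_revenue :: "'a::euclidean_space set \<Rightarrow> 'a set \<Rightarrow> 'a \<Rightarrow> bool" where
  "high_revenue A B u \<longleftrightarrow> real (card (HR A B u)) \<ge> real (card B) / 2"

end

theory Submission
  imports Defs
begin

text \<open>Let \<open>L\<close> be the set of low-revenue points of \<open>A\<close> and \<open>R\<close> the sum of their squared
  distances to \<open>\<rho>(A)\<close>. Optimality puts every point of \<open>B\<close> at least as close to \<open>\<rho>(B)\<close> as
  to \<open>\<rho>(A)\<close>, so a low-revenue pair \<open>(u,v)\<close> forces \<open>d(u,v) < d(u,\<rho>(A))/9\<close>. Any two points
  of \<open>L\<close> share a low-revenue partner in \<open>B\<close> (each has more than \<open>|B|/2\<close> of them), whence
  \<open>\<Delta>\<^sub>1(L) \<le> 2R/81\<close>: the set \<open>L\<close> is tight but far from \<open>\<rho>(A)\<close>. Moving \<open>L\<close> over to \<open>B\<close>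
  costs at most \<open>121R/81\<close> on the \<open>B\<close> side and, by the parallel axis theorem, saves at least
  \<open>R (1 + 79|L| / (81|A - L|))\<close> on the \<open>A\<close> side; optimality then gives \<open>119|L| \<le> 40|A|\<close>.
  Each high-revenue point contributes at least \<open>|B|/20\<close> to \<open>rev(A,B)\<close>.\<close>

lemma sum_eq_card_scaleR_centroid:
  fixes X :: "'a::euclidean_space set"
  assumes "finite X" "X \<noteq> {}"
  shows "(\<Sum>x\<in>X. x) = real (card X) *\<^sub>R centroid X"
  using assms by (simp add: centroid_def)

lemma parallel_axis:
  fixes X :: "'a::euclidean_space set"
  assumes "finite X" "X \<noteq> {}"
  shows "(\<Sum>x\<in>X. (dist x c)\<^sup>2) = cost1 X + real (card X) * (dist (centroid X) c)\<^sup>2"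
proof -
  let ?m = "centroid X"
  have norm_add_sq: "(norm (a + b))\<^sup>2 = (norm a)\<^sup>2 + 2 * (a \<bullet> b) + (norm b)\<^sup>2" for a b :: 'a
    using dot_norm[of a b] by simp
  have expand: "(dist x c)\<^sup>2 = (dist x ?m)\<^sup>2 + 2 * ((x - ?m) \<bullet> (?m - c)) + (dist ?m c)\<^sup>2" for x
    using norm_add_sq[of "x - ?m" "?m - c"] by (simp add: dist_norm)
  have "(\<Sum>x\<in>X. x - ?m) = 0"
    using assms by (simp add: sum_subtractf sum_eq_card_scaleR_centroid sum_constant_scaleR)
  hence cross: "(\<Sum>x\<in>X. (x - ?m) \<bullet> (?m - c)) = 0"
    by (simp add: inner_sum_left[symmetric])
  have "(\<Sum>x\<in>X. (dist x c)\<^sup>2)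
      = (\<Sum>x\<in>X. (dist x ?m)\<^sup>2 + 2 * ((x - ?m) \<bullet> (?m - c)) + (dist ?m c)\<^sup>2)"
    by (rule sum.cong[OF refl expand])
  also have "\<dots> = cost1 X + 2 * (\<Sum>x\<in>X. (x - ?m) \<bullet> (?m - c)) + real (card X) * (dist ?m c)\<^sup>2"
    by (simp add: sum.distrib sum_distrib_left cost1_def)
  finally show ?thesis by (simp add: cross)
qed

lemma cost1_le_sum_power2_dist:
  fixes X :: "'a::euclidean_space set"
  assumes "finite X"
  shows "cost1 X \<le> (\<Sum>x\<in>X. (dist x c)\<^sup>2)"
proof (cases "X = {}")
  case True thus ?thesis by (simp add: cost1_def)
next
  case False thus ?thesis using parallel_axis[OF assms False, of c] by simp
qed

lemma cost1_pairwise: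
  fixes X :: "'a::euclidean_space set"
  assumes "finite X" "X \<noteq> {}"
  shows "2 * real (card X) * cost1 X = (\<Sum>u\<in>X. \<Sum>u'\<in>X. (dist u' u)\<^sup>2)"
proof -
  have "(\<Sum>u\<in>X. \<Sum>u'\<in>X. (dist u' u)\<^sup>2) = (\<Sum>u\<in>X. cost1 X + real (card X) * (dist (centroid X) u)\<^sup>2)"
    using parallel_axis[OF assms] by simp
  also have "\<dots> = 2 * real (card X) * cost1 X"
    by (simp add: sum.distrib sum_distrib_left[symmetric] cost1_def dist_commute)
  finally show ?thesis by simp
qed

lemma card_mult_dist_centroid_Un:
  fixes S T :: "'a::euclidean_space set"
  assumes "finite S" "finite T" "S \<noteq> {}" "T \<noteq> {}" "S \<inter> T = {}"
  shows "real (card S) * dist (centroid S) (centroid (S \<union> T))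
       = real (card T) * dist (centroid T) (centroid (S \<union> T))"
proof -
  let ?c = "centroid (S \<union> T)"
  have "real (card (S \<union> T)) *\<^sub>R ?c = real (card S) *\<^sub>R centroid S + real (card T) *\<^sub>R centroid T"
    using assms sum.union_disjoint[OF assms(1,2,5), of "\<lambda>x. x"]
    by (simp add: sum_eq_card_scaleR_centroid)
  moreover have "real (card (S \<union> T)) = real (card S) + real (card T)"
    using assms by (simp add: card_Un_disjoint)
  ultimately have "real (card S) *\<^sub>R (centroid S - ?c) = - (real (card T) *\<^sub>R (centroid T - ?c))"
    by (simp add: algebra_simps scaleR_add_left)
  hence "norm (real (card S) *\<^sub>R (centroid S - ?c)) = norm (real (card T) *\<^sub>R (centroid T - ?c))"
    by (metis norm_minus_cancel)
  thus ?thesis by (simp add: dist_norm)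
qed

lemma rev_pt_nonneg: "rev_pt A B u v \<ge> 0"
  unfolding rev_pt_def Let_def by (auto simp: min_def le_max_iff_disj)

text \<open>The maximum in \<open>rev(u,v)\<close> is below \<open>10/9 \<cdot> d(u,\<rho>(A))\<close>, since
  \<open>d(v,\<rho>(B)) \<le> d(v,\<rho>(A)) \<le> d(u,v) + d(u,\<rho>(A))\<close> and \<open>d(u,v)\<close> is a tenth of it.\<close>
lemma rev_pt_low_imp_close:
  fixes A B :: "'a::euclidean_space set"
  assumes closer: "dist v (centroid B) \<le> dist v (centroid A)"
    and low: "rev_pt A B u v < 1/10"
  shows "dist u v < dist u (centroid A) / 9 \<and> dist u (centroid B) \<le> 11/9 * dist u (centroid A)"
proof -
  define r where "r = dist u (centroid A)"
  define s where "s = dist v (centroid B)"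
  have "max r s \<noteq> 0" and "min (dist u v / max r s) 1 < 1/10"
    using low unfolding rev_pt_def Let_def r_def s_def by (auto split: if_splits)
  moreover have "max r s \<ge> 0" by (simp add: r_def le_max_iff_disj)
  ultimately have d: "dist u v < max r s / 10"
    by (auto simp: min_def field_simps split: if_splits)
  have uB: "dist u (centroid B) \<le> dist u v + s"
    unfolding s_def by (rule dist_triangle)
  have "dist v (centroid A) \<le> dist u v + r"
    unfolding r_def using dist_triangle[of v "centroid A" u] by (simp add: dist_commute)
  hence "s < 10/9 * r \<or> s \<le> r"
    using d closer by (auto simp: s_def max_def split: if_splits)
  hence "max r s < 10/9 * r \<or> max r s = r"
    using zero_le_dist[of u "centroid A"] by (auto simp: r_def max_def)
  thus ?thesis
    using d uB zero_le_dist[of u "centroid A"] by (auto simp: r_def[symmetric])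
qed

lemma rev_set_ge_card_high_revenue:
  fixes A B :: "'a::euclidean_space set"
  assumes "finite A" "finite B"
  shows "real (card {u \<in> A. high_revenue A B u}) * real (card B) / 20 \<le> rev_set A B"
proof -
  let ?H = "{u \<in> A. high_revenue A B u}"
  have row: "real (card B) / 20 \<le> (\<Sum>j\<in>B. rev_pt A B u j)" if "u \<in> ?H" for u
  proof -
    have "real (card B) / 20 \<le> real (card (HR A B u)) / 10"
      using that by (simp add: high_revenue_def)
    also have "\<dots> = (\<Sum>j\<in>HR A B u. 1/10)" by simp
    also have "\<dots> \<le> (\<Sum>j\<in>HR A B u. rev_pt A B u j)"
      by (intro sum_mono) (auto simp: HR_def)
    also have "\<dots> \<le> (\<Sum>j\<in>B. rev_pt A B u j)"
      using assms(2) by (intro sum_mono2) (auto simp: HR_def rev_pt_nonneg)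
    finally show ?thesis .
  qed
  have "real (card ?H) * real (card B) / 20 = (\<Sum>i\<in>?H. real (card B) / 20)" by simp
  also have "\<dots> \<le> (\<Sum>i\<in>?H. \<Sum>j\<in>B. rev_pt A B i j)"
    by (intro sum_mono row)
  also have "\<dots> \<le> rev_set A B"
    unfolding rev_set_def using assms
    by (intro sum_mono2) (auto intro: sum_nonneg rev_pt_nonneg)
  finally show ?thesis .
qed

locale optimal_2means_split =
  fixes P A B :: "'a::euclidean_space set"
  assumes finite_P: "finite P" and optimal: "optimal_2means P A B"
begin

lemma two_partition: "two_partition P A B"
  using optimal by (simp add: optimal_2means_def)

lemma finite_A: "finite A" and finite_B: "finite B" and A_ne: "A \<noteq> {}"
  and disjoint: "A \<inter> B = {}"
  using two_partition finite_P unfolding two_partition_def by (auto intro: finite_subset)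

lemma cost1_le_two_partition: "two_partition P A' B' \<Longrightarrow> cost1 A + cost1 B \<le> cost1 A' + cost1 B'"
  using optimal by (simp add: optimal_2means_def)

text \<open>Otherwise moving \<open>v\<close> from \<open>B\<close> to \<open>A\<close> would be cheaper.\<close>
lemma dist_centroid_le:
  assumes "v \<in> B"
  shows "dist v (centroid B) \<le> dist v (centroid A)"
proof (cases "B = {v}")
  case True thus ?thesis by (simp add: centroid_def)
next
  case False
  have "v \<notin> A" using assms disjoint by auto
  have "cost1 A + cost1 B \<le> cost1 (insert v A) + cost1 (B - {v})"
    using two_partition False assms
    by (intro cost1_le_two_partition) (auto simp: two_partition_def)
  moreover have "cost1 (insert v A) \<le> cost1 A + (dist v (centroid A))\<^sup>2"
  proof -
    have "cost1 (insert v A) \<le> (\<Sum>x\<in>insert v A. (dist x (centroid A))\<^sup>2)"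
      using finite_A by (intro cost1_le_sum_power2_dist) auto
    also have "\<dots> = cost1 A + (dist v (centroid A))\<^sup>2"
      using finite_A \<open>v \<notin> A\<close> by (simp add: cost1_def)
    finally show ?thesis .
  qed
  moreover have "cost1 (B - {v}) + (dist v (centroid B))\<^sup>2 \<le> cost1 B"
  proof -
    have "cost1 (B - {v}) \<le> (\<Sum>x\<in>B - {v}. (dist x (centroid B))\<^sup>2)"
      using finite_B by (intro cost1_le_sum_power2_dist) auto
    also have "\<dots> + (dist v (centroid B))\<^sup>2 = cost1 B"
      unfolding cost1_def using finite_B assms by (simp add: sum.remove add.commute)
    finally show ?thesis by simp
  qed
  ultimately have "(dist v (centroid B))\<^sup>2 \<le> (dist v (centroid A))\<^sup>2"
    by linarith
  thus ?thesis by (simp add: power2_le_iff_abs_le)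
qed

definition low_revenue_points :: "'a set" where
  "low_revenue_points = {u \<in> A. \<not> high_revenue A B u}"

definition low_inertia :: real where
  "low_inertia = (\<Sum>u\<in>low_revenue_points. (dist u (centroid A))\<^sup>2)"

lemma low_revenue_points_subset: "low_revenue_points \<subseteq> A"
  by (auto simp: low_revenue_points_def)

lemma finite_low_revenue_points: "finite low_revenue_points"
  using finite_A low_revenue_points_subset by (rule finite_subset[rotated])

lemma card_LR_gt:
  assumes "u \<in> low_revenue_points"
  shows "real (card B) / 2 < real (card (LR A B u))"
proof -
  have sub: "HR A B u \<subseteq> B" by (auto simp: HR_def)
  have "card (LR A B u) = card B - card (HR A B u)" "card (HR A B u) \<le> card B"
    unfolding LR_def using card_Diff_subset[OF finite_subset[OF sub finite_B] sub] card_mono[OF finite_B sub]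
    by auto
  moreover have "real (card (HR A B u)) < real (card B) / 2"
    using assms by (auto simp: low_revenue_points_def high_revenue_def)
  ultimately show ?thesis by (simp add: of_nat_diff)
qed

lemma LR_close:
  assumes "v \<in> LR A B u"
  shows "dist u v < dist u (centroid A) / 9 \<and> dist u (centroid B) \<le> 11/9 * dist u (centroid A)"
proof (rule rev_pt_low_imp_close)
  show "dist v (centroid B) \<le> dist v (centroid A)"
    using assms by (intro dist_centroid_le) (auto simp: LR_def)
  show "rev_pt A B u v < 1/10"
    using assms by (auto simp: LR_def HR_def)
qed

text \<open>Two sets of more than \<open>|B|/2\<close> points of \<open>B\<close> meet.\<close>
lemma LR_Int_nonempty:
  assumes "u \<in> low_revenue_points" "u' \<in> low_revenue_points"
  shows "LR A B u \<inter> LR A B u' \<noteq> {}"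
proof
  assume "LR A B u \<inter> LR A B u' = {}"
  moreover have "LR A B u \<subseteq> B" "LR A B u' \<subseteq> B" by (auto simp: LR_def)
  ultimately have "card (LR A B u) + card (LR A B u') \<le> card B"
    using finite_B by (metis card_Un_disjoint card_mono finite_subset le_sup_iff)
  thus False using card_LR_gt[OF assms(1)] card_LR_gt[OF assms(2)] by linarith
qed

lemma dist_centroid_pos:
  assumes "u \<in> low_revenue_points"
  shows "0 < dist u (centroid A)"
proof -
  obtain v where "v \<in> LR A B u" using LR_Int_nonempty[OF assms assms] by auto
  thus ?thesis using LR_close[of v u] zero_le_dist[of u v] by linarith
qed

lemma power2_dist_low_revenue_points:
  assumes "u \<in> low_revenue_points" "u' \<in> low_revenue_points"
  shows "(dist u' u)\<^sup>2 \<le> 2/81 * ((dist u' (centroid A))\<^sup>2 + (dist u (centroid A))\<^sup>2)"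
proof -
  let ?r = "dist u (centroid A)" and ?r' = "dist u' (centroid A)"
  obtain v where "v \<in> LR A B u" "v \<in> LR A B u'" using LR_Int_nonempty[OF assms] by auto
  hence "dist u' v < ?r' / 9" "dist u v < ?r / 9"
    using LR_close by blast+
  hence "dist u' u \<le> (?r' + ?r) / 9"
    using dist_triangle[of u' u v] by (simp add: dist_commute)
  hence "(dist u' u)\<^sup>2 \<le> ((?r' + ?r) / 9)\<^sup>2"
    by (intro power_mono) auto
  also have "\<dots> \<le> 2/81 * (?r'\<^sup>2 + ?r\<^sup>2)"
    using sum_squares_bound[of ?r' ?r] by (simp add: power2_eq_square field_simps)
  finally show ?thesis .
qed

lemma cost1_low_revenue_points_le: "cost1 low_revenue_points \<le> 2/81 * low_inertia"
proof (cases "low_revenue_points = {}")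
  case True thus ?thesis by (simp add: cost1_def low_inertia_def)
next
  case False
  let ?L = low_revenue_points and ?n = "real (card low_revenue_points)"
  define c :: real where "c = 2/81"
  have "2 * ?n * cost1 ?L = (\<Sum>u\<in>?L. \<Sum>u'\<in>?L. (dist u' u)\<^sup>2)"
    by (rule cost1_pairwise[OF finite_low_revenue_points False])
  also have "\<dots> \<le> (\<Sum>u\<in>?L. \<Sum>u'\<in>?L. c * (dist u' (centroid A))\<^sup>2 + c * (dist u (centroid A))\<^sup>2)"
    unfolding c_def distrib_left[symmetric] by (intro sum_mono power2_dist_low_revenue_points)
  also have "\<dots> = 2 * ?n * (c * low_inertia)"
    by (simp add: sum.distrib sum_distrib_left[symmetric] low_inertia_def)
  finally show ?thesis
    using False finite_low_revenue_points by (simp add: card_gt_0_iff c_def)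
qed

lemma low_inertia_pos:
  assumes "low_revenue_points \<noteq> {}"
  shows "0 < low_inertia"
proof -
  obtain u where u: "u \<in> low_revenue_points" using assms by auto
  have "(dist u (centroid A))\<^sup>2 \<le> low_inertia"
    unfolding low_inertia_def using finite_low_revenue_points u by (intro member_le_sum) auto
  thus ?thesis using dist_centroid_pos[OF u] by (smt (verit) zero_less_power)
qed

lemma low_inertia_le_card_mult_power2_dist_centroids:
  "79/81 * low_inertia
     \<le> real (card low_revenue_points) * (dist (centroid low_revenue_points) (centroid A))\<^sup>2"
proof (cases "low_revenue_points = {}")
  case True thus ?thesis by (simp add: low_inertia_def)
next
  case False
  thus ?thesis
    using parallel_axis[OF finite_low_revenue_points False, of "centroid A"]
      cost1_low_revenue_points_le by (simp add: low_inertia_def)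
qed

lemma cost1_Un_low_revenue_points_le:
  "cost1 (B \<union> low_revenue_points) \<le> cost1 B + 121/81 * low_inertia"
proof -
  have "cost1 (B \<union> low_revenue_points) \<le> (\<Sum>x\<in>B \<union> low_revenue_points. (dist x (centroid B))\<^sup>2)"
    using finite_B finite_low_revenue_points by (intro cost1_le_sum_power2_dist) auto
  also have "\<dots> = cost1 B + (\<Sum>x\<in>low_revenue_points. (dist x (centroid B))\<^sup>2)"
    unfolding cost1_def using finite_B finite_low_revenue_points disjoint low_revenue_points_subset
    by (subst sum.union_disjoint) auto
  also have "(\<Sum>x\<in>low_revenue_points. (dist x (centroid B))\<^sup>2)
      \<le> (\<Sum>x\<in>low_revenue_points. (11/9 * dist x (centroid A))\<^sup>2)"
  proof (intro sum_mono power_mono)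
    fix x assume "x \<in> low_revenue_points"
    then obtain v where "v \<in> LR A B x" using LR_Int_nonempty by blast
    thus "dist x (centroid B) \<le> 11/9 * dist x (centroid A)" using LR_close by blast
  qed auto
  also have "\<dots> = 121/81 * low_inertia"
    by (simp add: low_inertia_def power_mult_distrib power_divide sum_distrib_left)
  finally show ?thesis by simp
qed

text \<open>Moving the low-revenue points from \<open>A\<close> to \<open>B\<close> must not pay off.\<close>
lemma card_mult_power2_dist_centroid_Diff_le:
  assumes "A - low_revenue_points \<noteq> {}"
  shows "real (card (A - low_revenue_points))
           * (dist (centroid (A - low_revenue_points)) (centroid A))\<^sup>2 \<le> 40/81 * low_inertia"
proof -
  let ?S = "A - low_revenue_points"
  have "cost1 A = (\<Sum>x\<in>?S. (dist x (centroid A))\<^sup>2) + low_inertia"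
    unfolding cost1_def low_inertia_def using finite_A low_revenue_points_subset
    by (metis sum.subset_diff)
  also have "(\<Sum>x\<in>?S. (dist x (centroid A))\<^sup>2)
      = cost1 ?S + real (card ?S) * (dist (centroid ?S) (centroid A))\<^sup>2"
    using finite_A assms by (intro parallel_axis) auto
  finally have "cost1 A = cost1 ?S + real (card ?S) * (dist (centroid ?S) (centroid A))\<^sup>2 + low_inertia" .
  moreover have "cost1 A + cost1 B \<le> cost1 ?S + cost1 (B \<union> low_revenue_points)"
    using two_partition assms low_revenue_points_subset
    by (intro cost1_le_two_partition) (auto simp: two_partition_def)
  ultimately show ?thesis
    using cost1_Un_low_revenue_points_le by linarith
qed

lemma card_low_revenue_points_le: "119 * real (card low_revenue_points) \<le> 40 * real (card A)"
proof -
  let ?L = low_revenue_points and ?S = "A - low_revenue_points"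
  let ?n = "real (card ?L)" and ?m = "real (card ?S)"
  have card_A: "real (card A) = ?m + ?n"
    using card_Diff_subset[OF finite_low_revenue_points low_revenue_points_subset]
      card_mono[OF finite_A low_revenue_points_subset] by (simp add: of_nat_diff)
  consider "?L = {}" | "?L = A" | "?L \<noteq> {}" "?S \<noteq> {}"
    using low_revenue_points_subset by blast
  thus ?thesis
  proof cases
    case 1 thus ?thesis by simp
  next
    case 2
    hence "cost1 A = low_inertia" by (simp add: cost1_def low_inertia_def)
    thus ?thesis using 2 cost1_low_revenue_points_le low_inertia_pos A_ne by simp
  next
    case 3
    have "?m * dist (centroid ?S) (centroid A) = ?n * dist (centroid ?L) (centroid A)"
      using card_mult_dist_centroid_Un[of ?S ?L] finite_A finite_low_revenue_points 3
        low_revenue_points_subset by (auto simp: Un_absorb2)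
    hence "?n * (?n * (dist (centroid ?L) (centroid A))\<^sup>2) = ?m * (?m * (dist (centroid ?S) (centroid A))\<^sup>2)"
      by (simp add: power2_eq_square algebra_simps) (metis mult.assoc mult.commute)
    also have "\<dots> \<le> ?m * (40/81 * low_inertia)"
      using card_mult_power2_dist_centroid_Diff_le 3 by (intro mult_left_mono) auto
    finally have "?n * (79/81 * low_inertia) \<le> ?m * (40/81 * low_inertia)"
      using low_inertia_le_card_mult_power2_dist_centroids
      by (smt (verit) mult_left_mono of_nat_0_le_iff)
    hence "79 * ?n \<le> 40 * ?m"
      using low_inertia_pos 3 by (simp add: algebra_simps)
    thus ?thesis using card_A by simp
  qed
qed

lemma card_high_revenue_ge: "4/7 * real (card A) \<le> real (card {u \<in> A. high_revenue A B u})"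
proof -
  have "card {u \<in> A. high_revenue A B u} + card low_revenue_points = card A"
    unfolding low_revenue_points_def using finite_A
    by (subst card_Un_disjoint[symmetric]) (auto intro: arg_cong[where f = card])
  thus ?thesis using card_low_revenue_points_le by (simp flip: of_nat_add)
qed

end

theorem mainTheorem3:
  fixes P A B :: "'a::euclidean_space set"
  assumes "finite P"
    and "optimal_2means P A B"
    and "card A \<ge> card B"
  shows "real (card {u \<in> A. high_revenue A B u}) \<ge> 4/7 * real (card A) \<and>
         rev_set A B \<ge> 1/35 * real (card A) * real (card B)"
proof -
  interpret optimal_2means_split P A B
    using assms(1,2) by unfold_locales
  have high: "4/7 * real (card A) \<le> real (card {u \<in> A. high_revenue A B u})"
    by (rule card_high_revenue_ge)
  have "1/35 * real (card A) * real (card B) = 4/7 * real (card A) * real (card B) / 20"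
    by simp
  also have "\<dots> \<le> real (card {u \<in> A. high_revenue A B u}) * real (card B) / 20"
    using high by (intro divide_right_mono mult_right_mono) auto
  also have "\<dots> \<le> rev_set A B"
    using finite_A finite_B by (rule rev_set_ge_card_high_revenue)
  finally show ?thesis using high by simp
qed

end
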